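(* Every free quandle is right orderable and semi-latin.
   Context: A quandle is a non-empty set $Q$ with a binary operation $*$ such that $x*x=x$ for all $x$; for all $x,y$ there is a unique $z$ with $x=z*y$; and $(x*y)*z=(x*z)*(y*z)$ for all $x,y,z$. The free quandle on a set $S$ is the quandle $FQ(S)$ with a map $S\to FQ(S)$ satisfying the usual universal property among quandles (equivalently: the set of symbols $a^w$, $a\in S$, $w$ in the free group $F(S)$, with $a^w*b^u=a^{wu^{-1}bu}$, modulo the equivalence relation generated by $a^w=a^{aw}$). A quandle $Q$ is right orderable if there is a linear order $<$ on $Q$ such that $x<y$ implies $x*z<y*z$ for all $x,y,z\in Q$. A quandle $Q$ is semi-latin if for each $x\in Q$ the map $L_x:Q\to Q$, $L_x(y)=x*y$, is injective. *)

theory Defs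
  imports Main
begin

definition quandle :: "'q set \<Rightarrow> ('q \<Rightarrow> 'q \<Rightarrow> 'q) \<Rightarrow> bool" where
  "quandle Q op \<longleftrightarrow> Q \<noteq> {} \<and>
     (\<forall>x\<in>Q. \<forall>y\<in>Q. op x y \<in> Q) \<and>
     (\<forall>x\<in>Q. op x x = x) \<and>
     (\<forall>x\<in>Q. \<forall>y\<in>Q. \<exists>!z. z \<in> Q \<and> x = op z y) \<and>
     (\<forall>x\<in>Q. \<forall>y\<in>Q. \<forall>z\<in>Q. op (op x y) z = op (op x z) (op y z))"

definition right_orderable :: "'q set \<Rightarrow> ('q \<Rightarrow> 'q \<Rightarrow> 'q) \<Rightarrow> bool" where
  "right_orderable Q op \<longleftrightarrow> (\<exists>r. strict_linear_order_on Q r \<and>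
     (\<forall>x\<in>Q. \<forall>y\<in>Q. \<forall>z\<in>Q. (x, y) \<in> r \<longrightarrow> (op x z, op y z) \<in> r))"

definition semi_latin :: "'q set \<Rightarrow> ('q \<Rightarrow> 'q \<Rightarrow> 'q) \<Rightarrow> bool" where
  "semi_latin Q op \<longleftrightarrow> (\<forall>x\<in>Q. inj_on (\<lambda>y. op x y) Q)"

text \<open>A letter (s, True) is the generator s, (s, False) is its inverse.\<close>
type_synonym 'a word = "('a \<times> bool) list"

definition cancels :: "'a \<times> bool \<Rightarrow> 'a \<times> bool \<Rightarrow> bool" where
  "cancels x y \<longleftrightarrow> fst x = fst y \<and> snd x \<noteq> snd y"

fun reduced :: "'a word \<Rightarrow> bool" where
  "reduced [] = True"
| "reduced [x] = True"
| "reduced (x # y # xs) = (\<not> cancels x y \<and> reduced (y # xs))"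

fun red_step :: "'a \<times> bool \<Rightarrow> 'a word \<Rightarrow> 'a word" where
  "red_step x [] = [x]"
| "red_step x (y # ys) = (if cancels x y then ys else x # y # ys)"

definition reduce :: "'a word \<Rightarrow> 'a word" where
  "reduce w = foldr red_step w []"

definition inv_word :: "'a word \<Rightarrow> 'a word" where
  "inv_word w = rev (map (\<lambda>(s, b). (s, \<not> b)) w)"

definition fg_mult :: "'a word \<Rightarrow> 'a word \<Rightarrow> 'a word" where
  "fg_mult u v = reduce (u @ v)"

definition fg_carrier :: "'a set \<Rightarrow> 'a word set" where
  "fg_carrier S = {w. reduced w \<and> fst ` set w \<subseteq> S}"

text \<open>Elements of FQ(S) are symbols a^w (a in S, w in F(S)) modulo a^w = a^(a w).
  The class of a^w is {a^(a^k w) | k in Z}; we represent it by its unique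
  representative whose reduced word w does not begin with a letter a^{+1} or a^{-1}.\<close>

definition strip :: "'a \<Rightarrow> 'a word \<Rightarrow> 'a word" where
  "strip a w = dropWhile (\<lambda>x. fst x = a) w"

definition fq_carrier :: "'a set \<Rightarrow> ('a \<times> 'a word) set" where
  "fq_carrier S = {(a, w). a \<in> S \<and> w \<in> fg_carrier S \<and> (w = [] \<or> fst (hd w) \<noteq> a)}"

definition fq_op :: "('a \<times> 'a word) \<Rightarrow> ('a \<times> 'a word) \<Rightarrow> ('a \<times> 'a word)" where
  "fq_op x y = (case x of (a, w) \<Rightarrow> case y of (b, u) \<Rightarrow>
     (a, strip a (fg_mult (fg_mult (fg_mult w (inv_word u)) [(b, True)]) u)))"

end

(* An element a^w of the free quandle is the coset <a>w of the free group F(S), in normal form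
   (w reduced and not starting with a letter a^{+1} or a^{-1}), and b^u acts on it by right
   multiplication with the conjugate u^{-1} b u.

   Semi-latin: if a^w * b^u = a^w * c^v, then w u^{-1} b u and w v^{-1} c v agree up to a leading
   power of a; both conjugates have exponent sum 1, so that power is trivial, and cancelling w
   leaves u^{-1} b u = v^{-1} c v, whence b^u = c^v.

   Right orderable: compare generators first.  Inside the component of a, send <a>w to the
   left-infinite reduced word ... a a a w.  F(S) acts on such words (the ends of its Cayley tree)
   by right multiplication, preserving the cyclic order given by a planar embedding of the tree.
   Cutting this cyclic order gives a lexicographic linear order, which a letter x preserves up to
   moving a terminal segment to the front.  As for homeomorphisms of the circle lifted to the line,
   counting these crossings with an integer cocycle yields a linear order on Z x ends preserved
   by the lifted action; the integer attached to <a>w sums the cocycle along w. *)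

theory Submission
  imports Defs
begin

section \<open>Free reduction\<close>

definition inv_letter :: "'a \<times> bool \<Rightarrow> 'a \<times> bool" where
  "inv_letter x = (fst x, \<not> snd x)"

lemma inv_letter_inv_letter [simp]: "inv_letter (inv_letter x) = x"
  by (simp add: inv_letter_def)

lemma inv_letter_neq [simp]: "inv_letter x \<noteq> x" "x \<noteq> inv_letter x"
  by (simp_all add: inv_letter_def prod_eq_iff)

lemma fst_inv_letter [simp]: "fst (inv_letter x) = fst x"
  and snd_inv_letter [simp]: "snd (inv_letter x) = (\<not> snd x)"
  by (simp_all add: inv_letter_def)

lemma inv_letter_eq_iff [simp]: "inv_letter x = inv_letter y \<longleftrightarrow> x = y"
  by (metis inv_letter_inv_letter)

lemma eq_inv_letter_commute: "y = inv_letter x \<longleftrightarrow> x = inv_letter y"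
  and inv_letter_eq_conv: "inv_letter x = y \<longleftrightarrow> x = inv_letter y"
  by auto

lemma cancels_iff: "cancels x y \<longleftrightarrow> y = inv_letter x"
  by (auto simp: cancels_def inv_letter_def prod_eq_iff)

lemma letter_eq_if_same_generator: "fst x = fst y \<Longrightarrow> y \<noteq> inv_letter x \<Longrightarrow> y = x"
  by (auto simp: inv_letter_def prod_eq_iff)

lemma reduced_Cons_iff: "reduced (x # w) \<longleftrightarrow> reduced w \<and> (w = [] \<or> hd w \<noteq> inv_letter x)"
  by (cases w) (auto simp: cancels_iff)

lemma reduced_append_iff:
  "reduced (u @ v) \<longleftrightarrow> reduced u \<and> reduced v \<and> (u = [] \<or> v = [] \<or> hd v \<noteq> inv_letter (last u))"
  by (induction u) (auto simp: reduced_Cons_iff)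

lemma reduced_rev_iff: "reduced (rev w) \<longleftrightarrow> reduced w"
  by (induction w) (auto simp: reduced_append_iff reduced_Cons_iff last_rev)

lemma reduced_map_inv_letter_iff: "reduced (map inv_letter w) \<longleftrightarrow> reduced w"
  by (induction w) (auto simp: reduced_Cons_iff hd_map inv_letter_eq_conv)

lemma inv_word_conv: "inv_word w = rev (map inv_letter w)"
  by (simp add: inv_word_def inv_letter_def case_prod_beta)

lemma reduced_red_step: "reduced r \<Longrightarrow> reduced (red_step x r)"
  by (cases r) (auto simp: reduced_Cons_iff cancels_iff)

lemma red_step_inv_letter: "reduced r \<Longrightarrow> red_step (inv_letter x) (red_step x r) = r"
  by (cases r rule: reduced.cases) (auto simp: cancels_iff)

lemma reduced_foldr_red_step: "reduced r \<Longrightarrow> reduced (foldr red_step u r)"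
  by (induction u) (auto intro: reduced_red_step)

lemma reduced_reduce: "reduced (reduce w)"
  by (simp add: reduce_def reduced_foldr_red_step)

lemma reduce_append: "reduce (u @ v) = foldr red_step u (reduce v)"
  by (simp add: reduce_def)

lemma reduce_reduced: "reduced w \<Longrightarrow> reduce w = w"
  by (induction w rule: reduced.induct) (auto simp: reduce_def cancels_iff)

lemma foldr_red_step_red_step:
  assumes "reduced r" "reduced z"
  shows "foldr red_step (red_step x r) z = red_step x (foldr red_step r z)"
proof (cases "r \<noteq> [] \<and> hd r = inv_letter x")
  case True
  then obtain r' where r: "r = inv_letter x # r'" by (cases r) auto
  have "red_step x (red_step (inv_letter x) (foldr red_step r' z)) = foldr red_step r' z"
    using red_step_inv_letter[of _ "inv_letter x"] reduced_foldr_red_step[OF assms(2)] by simp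
  then show ?thesis using r by (simp add: cancels_iff)
next
  case False
  then show ?thesis by (cases r) (auto simp: cancels_iff)
qed

lemma foldr_red_step_reduce: "reduced z \<Longrightarrow> foldr red_step (reduce u) z = foldr red_step u z"
  by (induction u) (simp_all add: reduce_def foldr_red_step_red_step reduced_foldr_red_step)

lemma reduce_reduce_append: "reduce (reduce u @ v) = reduce (u @ v)"
  by (simp add: reduce_append foldr_red_step_reduce reduced_reduce)

lemma reduce_append_reduce: "reduce (u @ reduce v) = reduce (u @ v)"
  by (simp add: reduce_append reduce_reduced reduced_reduce)

lemma foldr_red_step_inv_word: "reduced z \<Longrightarrow> foldr red_step (inv_word w @ w) z = z"
  by (induction w arbitrary: z) (simp_all add: inv_word_conv red_step_inv_letter reduced_foldr_red_step)

lemma reduce_inv_word_append: "reduce (inv_word w @ reduce (w @ g)) = reduce g"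
proof -
  have "reduce (inv_word w @ reduce (w @ g)) = reduce ((inv_word w @ w) @ g)"
    by (simp add: reduce_append_reduce)
  also have "\<dots> = foldr red_step (inv_word w @ w) (reduce g)"
    by (rule reduce_append)
  also have "\<dots> = reduce g"
    by (rule foldr_red_step_inv_word[OF reduced_reduce])
  finally show ?thesis .
qed

lemma reduce_snoc:
  assumes "reduced w"
  shows "reduce (w @ [y]) = (if w \<noteq> [] \<and> last w = inv_letter y then butlast w else w @ [y])"
proof (cases "w \<noteq> [] \<and> last w = inv_letter y")
  case True
  then obtain w' where w: "w = w' @ [inv_letter y]" by (metis append_butlast_last_id)
  then have "reduce (w @ [y]) = reduce w'"
    by (simp add: reduce_append reduce_def cancels_iff)
  also have "\<dots> = w'" using assms w by (simp add: reduced_append_iff reduce_reduced)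
  finally show ?thesis using w by simp
next
  case False
  then have "reduced (w @ [y])"
    using assms by (auto simp: reduced_append_iff eq_inv_letter_commute[of y])
  then show ?thesis using False by (auto simp: reduce_reduced)
qed

definition exp_sum :: "'a word \<Rightarrow> int" where
  "exp_sum w = (\<Sum>x\<leftarrow>w. if snd x then 1 else -1)"

lemma exp_sum_simps [simp]:
  "exp_sum [] = 0"
  "exp_sum (x # w) = (if snd x then 1 else -1) + exp_sum w"
  "exp_sum (u @ v) = exp_sum u + exp_sum v"
  by (simp_all add: exp_sum_def)

lemma exp_sum_reduce: "exp_sum (reduce w) = exp_sum w"
proof -
  have "exp_sum (red_step x r) = exp_sum (x # r)" for x and r :: "'a word"
    by (cases r) (auto simp: cancels_def)
  then show ?thesis
    by (induction w) (simp_all add: reduce_def)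
qed

lemma exp_sum_inv_word: "exp_sum (inv_word w) = - exp_sum w"
  by (induction w) (simp_all add: inv_word_conv)

section \<open>Free quandle elements as cosets\<close>

definition coset_rep :: "'a \<Rightarrow> 'a word \<Rightarrow> bool" where
  "coset_rep a w \<longleftrightarrow> reduced w \<and> (w = [] \<or> fst (hd w) \<noteq> a)"

lemma coset_rep_if_fq_carrier: "(a, w) \<in> fq_carrier S \<Longrightarrow> coset_rep a w"
  by (simp add: fq_carrier_def fg_carrier_def coset_rep_def)

lemma strip_coset_rep: "coset_rep a w \<Longrightarrow> strip a w = w"
  by (cases w) (auto simp: coset_rep_def strip_def)

lemma strip_foldr_red_step: "\<forall>x\<in>set t. fst x = a \<Longrightarrow> strip a (foldr red_step t r) = strip a r"
proof (induction t)
  case (Cons x t)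
  have "strip a (red_step x r') = strip a r'" for r'
    using Cons.prems by (cases r') (auto simp: strip_def cancels_def)
  then show ?case using Cons by simp
qed simp

lemma strip_reduce_append: "strip a (reduce (p @ g)) = strip a (reduce (strip a p @ g))"
proof -
  let ?t = "takeWhile (\<lambda>x. fst x = a) p"
  have "\<forall>x\<in>set ?t. fst x = a"
    by (auto dest: set_takeWhileD)
  have "reduce (p @ g) = reduce (?t @ strip a p @ g)"
    by (metis append_assoc strip_def takeWhile_dropWhile_id)
  also have "\<dots> = foldr red_step ?t (reduce (strip a p @ g))"
    by (rule reduce_append)
  finally show ?thesis
    by (simp add: strip_foldr_red_step[OF \<open>\<forall>x\<in>set ?t. fst x = a\<close>])
qed

lemma coset_rep_append: "coset_rep a (u @ v) \<Longrightarrow> coset_rep a u"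
  unfolding coset_rep_def using reduced_append_iff[of u v] by (cases u) auto

definition coset_mult :: "'a \<Rightarrow> 'a word \<Rightarrow> 'a word \<Rightarrow> 'a word" where
  "coset_mult a w g = strip a (reduce (w @ g))"

lemma fq_op_conv: "fq_op (a, w) (b, u) = (a, coset_mult a w (inv_word u @ (b, True) # u))"
  by (simp add: fq_op_def fg_mult_def coset_mult_def reduce_reduce_append)

lemma coset_rep_strip:
  assumes "reduced p"
  shows "coset_rep a (strip a p)"
proof -
  let ?P = "\<lambda>x. fst x = a"
  have "reduced (dropWhile ?P p)"
    using assms reduced_append_iff[of "takeWhile ?P p" "dropWhile ?P p"] by simp
  then show ?thesis
    using hd_dropWhile[of ?P p] by (auto simp: coset_rep_def strip_def)
qed

lemma coset_rep_coset_mult: "coset_rep a (coset_mult a w g)"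
  by (simp add: coset_mult_def coset_rep_strip reduced_reduce)

lemma coset_mult_Nil: "coset_rep a w \<Longrightarrow> coset_mult a w [] = w"
  by (simp add: coset_mult_def coset_rep_def reduce_reduced strip_coset_rep)

lemma coset_mult_Cons: "coset_mult a w (y # g) = coset_mult a (coset_mult a w [y]) g"
  by (simp add: coset_mult_def strip_reduce_append[symmetric] reduce_reduce_append)

lemma coset_mult_letter:
  assumes "coset_rep a w"
  shows "coset_mult a w [y] =
    (if w \<noteq> [] \<and> last w = inv_letter y then butlast w
     else if w = [] \<and> fst y = a then [] else w @ [y])"
proof -
  have "reduced w"
    using assms by (simp add: coset_rep_def)
  consider (cancel) "w \<noteq> []" "last w = inv_letter y" | (trivial) "w = []" "fst y = a"
    | (append) "\<not> (w \<noteq> [] \<and> last w = inv_letter y)" "\<not> (w = [] \<and> fst y = a)"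
    by blast
  then show ?thesis
  proof cases
    case cancel
    have "coset_rep a (butlast w @ [last w])"
      using assms cancel(1) by simp
    then have "coset_rep a (butlast w)"
      by (rule coset_rep_append)
    then show ?thesis
      using cancel \<open>reduced w\<close> by (simp add: coset_mult_def reduce_snoc strip_coset_rep)
  next
    case trivial
    then show ?thesis
      by (simp add: coset_mult_def reduce_def strip_def)
  next
    case append
    have "y \<noteq> inv_letter (last w)" if "w \<noteq> []"
      using append that by (metis inv_letter_inv_letter)
    then have "reduced (w @ [y])"
      using \<open>reduced w\<close> reduced_append_iff[of w "[y]"] by auto
    moreover have "fst (hd (w @ [y])) \<noteq> a"
      using assms append by (cases w) (auto simp: coset_rep_def)
    ultimately have "coset_rep a (w @ [y])"
      by (simp add: coset_rep_def)
    then show ?thesis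
      using append \<open>reduced w\<close> by (auto simp: coset_mult_def reduce_snoc strip_coset_rep)
  qed
qed

lemma reduced_one_generator_replicate:
  "reduced t \<Longrightarrow> \<forall>x\<in>set t. fst x = a \<Longrightarrow> \<exists>n b. t = replicate n (a, b)"
proof (induction t)
  case (Cons x t)
  then obtain n b where t: "t = replicate n (a, b)"
    by (auto simp: reduced_Cons_iff)
  show ?case
  proof (cases n)
    case 0
    then show ?thesis using Cons.prems t by (metis list.set_intros(1) prod.collapse replicate_0 replicate_Suc)
  next
    case (Suc m)
    then have "x = (a, b)"
      using Cons.prems t by (intro letter_eq_if_same_generator[symmetric]) (auto simp: reduced_Cons_iff)
    then show ?thesis using t by (metis replicate_Suc)
  qed
qed simp

lemma exp_sum_replicate: "exp_sum (replicate n (a, b)) = (if b then int n else - int n)"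
  by (induction n) auto

text \<open>The letters removed by \<open>strip a\<close> form a power of \<open>a\<close>, which the exponent sum determines.\<close>

lemma strip_exp_sum_inj:
  assumes "reduced p" "reduced p'" "strip a p = strip a p'" "exp_sum p = exp_sum p'"
  shows "p = p'"
proof -
  define t t' where "t = takeWhile (\<lambda>x. fst x = a) p" and "t' = takeWhile (\<lambda>x. fst x = a) p'"
  define s where "s = strip a p"
  have p: "p = t @ s"
    by (simp add: t_def s_def strip_def)
  have p': "p' = t' @ s"
    using assms(3) unfolding s_def t'_def strip_def by simp
  have "reduced t" "reduced t'"
    using assms(1,2) by (simp_all add: p p' reduced_append_iff)
  moreover have "\<forall>x\<in>set t. fst x = a" "\<forall>x\<in>set t'. fst x = a"
    by (auto simp: t_def t'_def dest: set_takeWhileD)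
  ultimately obtain n b n' b' where t: "t = replicate n (a, b)" and t': "t' = replicate n' (a, b')"
    by (metis reduced_one_generator_replicate)
  have "exp_sum t = exp_sum t'"
    using assms(4) by (simp add: p p')
  then have "n = n' \<and> (n = 0 \<or> b = b')"
    unfolding t t' exp_sum_replicate by (cases b; cases b') auto
  then have "t = t'"
    using t t' by auto
  then show ?thesis
    by (simp add: p p')
qed

lemma reduced_conj_word:
  assumes "coset_rep b u"
  shows "reduced (inv_word u @ (b, True) # u)"
proof -
  have u: "reduced u" "u = [] \<or> fst (hd u) \<noteq> b"
    using assms by (simp_all add: coset_rep_def)
  moreover have "last (inv_word u) = inv_letter (hd u)" if "u \<noteq> []"
    using that by (simp add: inv_word_conv last_rev hd_map)
  ultimately show ?thesis
    by (auto simp: reduced_append_iff reduced_Cons_iff inv_word_conv reduced_rev_iff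
        reduced_map_inv_letter_iff dest: arg_cong[where f = fst])
qed

lemma semi_latin_fq: "semi_latin (fq_carrier S) fq_op"
  unfolding semi_latin_def
proof (intro ballI inj_onI)
  fix x y y' assume "x \<in> fq_carrier S" "y \<in> fq_carrier S" "y' \<in> fq_carrier S"
    and eq: "fq_op x y = fq_op x y'"
  obtain a w b u c v where xyy': "x = (a, w)" "y = (b, u)" "y' = (c, v)"
    by (cases x, cases y, cases y') auto
  define g g' where "g = inv_word u @ (b, True) # u" and "g' = inv_word v @ (c, True) # v"
  have "coset_rep b u" "coset_rep c v"
    using \<open>y \<in> _\<close> \<open>y' \<in> _\<close> coset_rep_if_fq_carrier by (simp_all add: xyy')
  then have g: "reduced g" "reduced g'"
    by (simp_all add: g_def g'_def reduced_conj_word)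
  have "strip a (reduce (w @ g)) = strip a (reduce (w @ g'))"
    using eq xyy' by (simp add: fq_op_conv coset_mult_def g_def g'_def)
  moreover have "exp_sum (reduce (w @ g)) = exp_sum (reduce (w @ g'))"
    by (simp add: exp_sum_reduce g_def g'_def exp_sum_inv_word)
  ultimately have "reduce (w @ g) = reduce (w @ g')"
    by (rule strip_exp_sum_inj[OF reduced_reduce reduced_reduce])
  then have "reduce g = reduce g'"
    using reduce_inv_word_append[of w g] reduce_inv_word_append[of w g'] by simp
  then have "inv_word u @ (b, True) # u = inv_word v @ (c, True) # v"
    using g by (simp add: reduce_reduced g_def g'_def)
  moreover from arg_cong[OF this, of length] have "length (inv_word u) = length (inv_word v)"
    by (simp add: inv_word_conv)
  ultimately have "b = c \<and> u = v"
    by simp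
  then show "y = y'"
    using xyy' by simp
qed

section \<open>Ends of the free group\<close>

text \<open>A ray \<open>\<xi>\<close> stands for the left-infinite word \<open>\<dots> \<xi> 2 \<xi> 1 \<xi> 0\<close>, so that letters act on it
  at index 0.\<close>

type_synonym 'a ray = "nat \<Rightarrow> 'a \<times> bool"

definition reduced_ray :: "'a ray \<Rightarrow> bool" where
  "reduced_ray \<xi> \<longleftrightarrow> (\<forall>i. \<xi> (Suc i) \<noteq> inv_letter (\<xi> i))"

lemma reduced_ray_Suc_0:
  "reduced_ray \<xi> \<Longrightarrow> \<xi> 0 = inv_letter x \<Longrightarrow> \<xi> (Suc 0) \<noteq> x"
  by (metis reduced_ray_def inv_letter_inv_letter)

definition ray_mult :: "'a ray \<Rightarrow> 'a \<times> bool \<Rightarrow> 'a ray" where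
  "ray_mult \<xi> x = (if \<xi> 0 = inv_letter x then \<xi> \<circ> Suc else case_nat x \<xi>)"

lemma reduced_ray_mult: "reduced_ray \<xi> \<Longrightarrow> reduced_ray (ray_mult \<xi> x)"
  by (auto simp: reduced_ray_def ray_mult_def split: nat.splits)

lemma ray_mult_ray_mult_inv_letter:
  assumes "reduced_ray \<xi>"
  shows "ray_mult (ray_mult \<xi> x) (inv_letter x) = \<xi>"
proof (cases "\<xi> 0 = inv_letter x")
  case True
  then show ?thesis
    using reduced_ray_Suc_0[OF assms True] by (auto simp: ray_mult_def split: nat.splits)
qed (auto simp: ray_mult_def)

lemma ray_mult_const: "ray_mult (\<lambda>_. (a, True)) (a, b) = (\<lambda>_. (a, True))"
  by (auto simp: ray_mult_def inv_letter_def fun_eq_iff split: nat.split)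

text \<open>The coset \<open>\<langle>a\<rangle>w\<close> becomes the ray \<open>\<dots> a a a w\<close>.\<close>

definition coset_ray :: "'a \<Rightarrow> 'a word \<Rightarrow> 'a ray" where
  "coset_ray a w i = (if i < length w then rev w ! i else (a, True))"

lemma coset_ray_Nil: "coset_ray a [] = (\<lambda>_. (a, True))"
  by (simp add: coset_ray_def fun_eq_iff)

lemma coset_ray_snoc: "coset_ray a (w @ [y]) = case_nat y (coset_ray a w)"
  by (auto simp: coset_ray_def fun_eq_iff split: nat.split)

lemma coset_ray_0: "coset_ray a w 0 = (if w = [] then (a, True) else last w)"
  by (simp add: coset_ray_def rev_nth last_conv_nth)

lemma coset_ray_snoc_ray_mult:
  "coset_ray a w 0 \<noteq> inv_letter y \<Longrightarrow> coset_ray a (w @ [y]) = ray_mult (coset_ray a w) y"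
  by (simp add: ray_mult_def coset_ray_snoc)

lemma coset_rep_snoc:
  "coset_rep a (w @ [y]) \<Longrightarrow> coset_rep a w \<and> coset_ray a w 0 \<noteq> inv_letter y"
  by (auto simp: coset_rep_append coset_ray_0 coset_rep_def reduced_append_iff inv_letter_def)

lemma reduced_coset_ray: "coset_rep a w \<Longrightarrow> reduced_ray (coset_ray a w)"
proof (induction w rule: rev_induct)
  case Nil
  then show ?case by (simp add: coset_ray_Nil reduced_ray_def inv_letter_def)
next
  case (snoc y w)
  then show ?case
    using coset_rep_snoc[OF snoc.prems] by (simp add: coset_ray_snoc_ray_mult reduced_ray_mult)
qed

lemma coset_ray_inj:
  assumes "coset_rep a w" "coset_rep a u" "coset_ray a w = coset_ray a u"
  shows "w = u"
proof -
  have "\<not> length w < length u" if "coset_rep a u" "coset_ray a w = coset_ray a u" for w u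
  proof
    assume "length w < length u"
    then have "\<not> length u - 1 < length w" "u \<noteq> []"
      by auto
    then have "hd u = coset_ray a u (length u - 1)"
      by (simp add: coset_ray_def rev_nth hd_conv_nth)
    also have "\<dots> = coset_ray a w (length u - 1)"
      using that(2) by simp
    also have "\<dots> = (a, True)"
      using \<open>\<not> length u - 1 < length w\<close> by (simp add: coset_ray_def)
    finally show False
      using that(1) \<open>u \<noteq> []\<close> by (simp add: coset_rep_def)
  qed
  from this[OF assms(2,3)] this[OF assms(1) assms(3)[symmetric]] have "length w = length u"
    by linarith
  moreover have "rev w ! i = rev u ! i" if "i < length w" for i
    using fun_cong[OF assms(3), of i] that \<open>length w = length u\<close> by (simp add: coset_ray_def)
  ultimately have "rev w = rev u"
    by (intro nth_equalityI) auto
  then show ?thesis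
    by simp
qed

section \<open>The right ordering\<close>

locale letter_order =
  fixes less_letter :: "'a \<times> bool \<Rightarrow> 'a \<times> bool \<Rightarrow> bool" (infix "\<prec>" 50)
  assumes letter_irrefl: "\<not> x \<prec> x"
    and letter_trans: "x \<prec> y \<Longrightarrow> y \<prec> z \<Longrightarrow> x \<prec> z"
    and letter_total: "x \<noteq> y \<Longrightarrow> x \<prec> y \<or> y \<prec> x"
    and pos_less_neg: "(s, True) \<prec> (s, False)"
begin

lemma letter_asym: "x \<prec> y \<Longrightarrow> \<not> y \<prec> x"
  using letter_irrefl letter_trans by blast

text \<open>The cyclic order of the letters at a vertex of the Cayley tree, cut just after the
  letter \<open>c\<close> leading back to the previous vertex (or at the bottom of \<open>\<prec>\<close> if there is none).\<close>

definition cut_less :: "('a \<times> bool) option \<Rightarrow> 'a \<times> bool \<Rightarrow> 'a \<times> bool \<Rightarrow> bool" where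
  "cut_less c y z = (case c of
      None \<Rightarrow> y \<prec> z
    | Some c \<Rightarrow> if c \<prec> y then c \<prec> z \<longrightarrow> y \<prec> z else \<not> c \<prec> z \<and> y \<prec> z)"

lemma cut_less_None [simp]: "cut_less None = (\<prec>)"
  by (simp add: cut_less_def fun_eq_iff)

lemma cut_less_irrefl: "\<not> cut_less c y y"
  by (cases c) (auto simp: cut_less_def letter_irrefl)

lemma cut_less_trans: "cut_less c x y \<Longrightarrow> cut_less c y z \<Longrightarrow> cut_less c x z"
  by (cases c) (auto simp: cut_less_def split: if_splits intro: letter_trans)

lemma cut_less_total: "x \<noteq> y \<Longrightarrow> cut_less c x y \<or> cut_less c y x"
  by (cases c) (auto simp: cut_less_def dest: letter_total)

definition ray_ctx :: "('a \<times> bool) option \<Rightarrow> 'a ray \<Rightarrow> nat \<Rightarrow> ('a \<times> bool) option" where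
  "ray_ctx c \<xi> k = (case k of 0 \<Rightarrow> c | Suc j \<Rightarrow> Some (inv_letter (\<xi> j)))"

lemma ray_ctx_cong: "\<forall>i<k. \<xi> i = \<eta> i \<Longrightarrow> ray_ctx c \<xi> k = ray_ctx c \<eta> k"
  by (simp add: ray_ctx_def split: nat.split)

definition ray_less_from :: "('a \<times> bool) option \<Rightarrow> 'a ray \<Rightarrow> 'a ray \<Rightarrow> bool" where
  "ray_less_from c \<xi> \<eta> \<longleftrightarrow> (\<exists>k. (\<forall>i<k. \<xi> i = \<eta> i) \<and> cut_less (ray_ctx c \<xi> k) (\<xi> k) (\<eta> k))"

abbreviation ray_less :: "'a ray \<Rightarrow> 'a ray \<Rightarrow> bool" where
  "ray_less \<equiv> ray_less_from None"

lemma ray_less_from_irrefl: "\<not> ray_less_from c \<xi> \<xi>"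
  by (simp add: ray_less_from_def cut_less_irrefl)

lemma ray_less_from_trans:
  assumes "ray_less_from c \<xi> \<eta>" "ray_less_from c \<eta> \<zeta>"
  shows "ray_less_from c \<xi> \<zeta>"
proof -
  obtain k where k: "\<forall>i<k. \<xi> i = \<eta> i" "cut_less (ray_ctx c \<xi> k) (\<xi> k) (\<eta> k)"
    using assms(1) by (auto simp: ray_less_from_def)
  obtain l where l: "\<forall>i<l. \<eta> i = \<zeta> i" "cut_less (ray_ctx c \<eta> l) (\<eta> l) (\<zeta> l)"
    using assms(2) by (auto simp: ray_less_from_def)
  have "\<forall>i<min k l. \<xi> i = \<zeta> i"
    using k(1) l(1) by simp
  moreover have "cut_less (ray_ctx c \<xi> (min k l)) (\<xi> (min k l)) (\<zeta> (min k l))"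
  proof (cases k l rule: linorder_cases)
    case less
    then show ?thesis using k l by (simp add: min_def)
  next
    case equal
    then show ?thesis using k l ray_ctx_cong[OF k(1)] by (auto intro: cut_less_trans)
  next
    case greater
    then show ?thesis using k l ray_ctx_cong[of l \<xi> \<eta>] by (simp add: min_def)
  qed
  ultimately show ?thesis
    unfolding ray_less_from_def by blast
qed

lemma ray_less_from_total:
  assumes "\<xi> \<noteq> \<eta>"
  shows "ray_less_from c \<xi> \<eta> \<or> ray_less_from c \<eta> \<xi>"
proof -
  define k where "k = (LEAST k. \<xi> k \<noteq> \<eta> k)"
  have "\<exists>k. \<xi> k \<noteq> \<eta> k"
    using assms by auto
  then have "\<xi> k \<noteq> \<eta> k"
    unfolding k_def by (rule LeastI_ex)
  moreover have below: "\<forall>i<k. \<xi> i = \<eta> i"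
    unfolding k_def using not_less_Least by blast
  moreover have "ray_ctx c \<xi> k = ray_ctx c \<eta> k"
    using below by (rule ray_ctx_cong)
  ultimately show ?thesis
    using cut_less_total[of "\<xi> k" "\<eta> k" "ray_ctx c \<xi> k"]
    unfolding ray_less_from_def by (metis (no_types, lifting))
qed

lemma ray_less_from_head_neq:
  assumes "\<xi> 0 \<noteq> \<eta> 0"
  shows "ray_less_from c \<xi> \<eta> \<longleftrightarrow> cut_less c (\<xi> 0) (\<eta> 0)"
proof
  assume "ray_less_from c \<xi> \<eta>"
  then obtain k where "\<forall>i<k. \<xi> i = \<eta> i" "cut_less (ray_ctx c \<xi> k) (\<xi> k) (\<eta> k)"
    by (auto simp: ray_less_from_def)
  moreover from this(1) have "k = 0"
    using assms by (cases k) auto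
  ultimately show "cut_less c (\<xi> 0) (\<eta> 0)"
    by (simp add: ray_ctx_def)
next
  assume "cut_less c (\<xi> 0) (\<eta> 0)"
  then have "(\<forall>i<0. \<xi> i = \<eta> i) \<and> cut_less (ray_ctx c \<xi> 0) (\<xi> 0) (\<eta> 0)"
    by (simp add: ray_ctx_def)
  then show "ray_less_from c \<xi> \<eta>"
    unfolding ray_less_from_def by blast
qed

lemma ray_less_from_head_eq:
  assumes "\<xi> 0 = \<eta> 0"
  shows "ray_less_from c \<xi> \<eta> \<longleftrightarrow> ray_less_from (Some (inv_letter (\<xi> 0))) (\<xi> \<circ> Suc) (\<eta> \<circ> Suc)"
proof -
  have ctx: "ray_ctx c \<xi> (Suc k) = ray_ctx (Some (inv_letter (\<xi> 0))) (\<xi> \<circ> Suc) k" for k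
    by (simp add: ray_ctx_def split: nat.split)
  have below: "(\<forall>i<Suc k. \<xi> i = \<eta> i) \<longleftrightarrow> (\<forall>i<k. (\<xi> \<circ> Suc) i = (\<eta> \<circ> Suc) i)" for k
    using assms by (auto simp: less_Suc_eq_0_disj)
  have "ray_less_from c \<xi> \<eta> \<longleftrightarrow>
      (\<exists>k. (\<forall>i<Suc k. \<xi> i = \<eta> i) \<and> cut_less (ray_ctx c \<xi> (Suc k)) (\<xi> (Suc k)) (\<eta> (Suc k)))"
    unfolding ray_less_from_def
  proof
    assume "\<exists>k. (\<forall>i<k. \<xi> i = \<eta> i) \<and> cut_less (ray_ctx c \<xi> k) (\<xi> k) (\<eta> k)"
    then obtain k where k: "\<forall>i<k. \<xi> i = \<eta> i" "cut_less (ray_ctx c \<xi> k) (\<xi> k) (\<eta> k)"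
      by blast
    then obtain j where "k = Suc j"
      using assms cut_less_irrefl by (cases k) auto
    then show "\<exists>j. (\<forall>i<Suc j. \<xi> i = \<eta> i) \<and> cut_less (ray_ctx c \<xi> (Suc j)) (\<xi> (Suc j)) (\<eta> (Suc j))"
      using k by blast
  qed blast
  then show ?thesis
    unfolding ray_less_from_def below ctx by simp
qed

lemma ray_less_from_case_nat:
  "ray_less_from c (case_nat x \<xi>) (case_nat x \<eta>) \<longleftrightarrow> ray_less_from (Some (inv_letter x)) \<xi> \<eta>"
proof -
  have "case_nat x \<xi> \<circ> Suc = \<xi>" for \<xi> :: "'a ray"
    by auto
  then show ?thesis
    by (simp add: ray_less_from_head_eq)
qed

lemma ray_less_from_cong_head:
  "\<xi> 0 = \<eta> 0 \<Longrightarrow> ray_less_from c \<xi> \<eta> \<longleftrightarrow> ray_less_from c' \<xi> \<eta>"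
  by (simp add: ray_less_from_head_eq)

text \<open>Right multiplication by \<open>x\<close> is monotone on the terminal segment \<open>crosses x\<close> of
  \<open>ray_less\<close> and on its complement, and moves that segment to the front.\<close>

definition crosses :: "'a \<times> bool \<Rightarrow> 'a ray \<Rightarrow> bool" where
  "crosses x \<xi> \<longleftrightarrow> (if \<xi> 0 = inv_letter x then \<xi> (Suc 0) \<prec> x else inv_letter x \<prec> \<xi> 0)"

text \<open>The constant correction makes \<open>a\<^sup>\<plusminus>\<^sup>1\<close> fix the base coset \<open>\<dots> a a a\<close> at height 0.\<close>

definition ray_cocycle :: "'a \<times> bool \<Rightarrow> 'a ray \<Rightarrow> int" where
  "ray_cocycle x \<xi> = of_bool (crosses x \<xi>) - of_bool (\<not> snd x)"

definition lift_less :: "int \<times> 'a ray \<Rightarrow> int \<times> 'a ray \<Rightarrow> bool" where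
  "lift_less p q \<longleftrightarrow> fst p < fst q \<or> (fst p = fst q \<and> ray_less (snd p) (snd q))"

lemma lift_less_irrefl: "\<not> lift_less p p"
  by (simp add: lift_less_def ray_less_from_irrefl)

lemma lift_less_trans: "lift_less p q \<Longrightarrow> lift_less q r \<Longrightarrow> lift_less p r"
  unfolding lift_less_def using ray_less_from_trans by force

lemma lift_less_total: "p \<noteq> q \<Longrightarrow> lift_less p q \<or> lift_less q p"
  unfolding lift_less_def using ray_less_from_total by (metis linorder_neqE prod.expand)

lemma ray_mult_less_prepend:
  assumes less: "ray_less \<xi> \<eta>" and prepend: "\<xi> 0 \<noteq> inv_letter x" "\<eta> 0 \<noteq> inv_letter x"
  shows "lift_less (of_bool (crosses x \<xi>), ray_mult \<xi> x) (of_bool (crosses x \<eta>), ray_mult \<eta> x)"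
proof -
  have image: "ray_less (ray_mult \<xi> x) (ray_mult \<eta> x) \<longleftrightarrow> ray_less_from (Some (inv_letter x)) \<xi> \<eta>"
    using prepend by (simp add: ray_mult_def ray_less_from_case_nat)
  show ?thesis
  proof (cases "\<xi> 0 = \<eta> 0")
    case True
    then show ?thesis
      using prepend image less ray_less_from_cong_head[of \<xi> \<eta> "Some (inv_letter x)" None]
      by (simp add: lift_less_def crosses_def)
  next
    case False
    then show ?thesis
      using prepend image less letter_trans[of "inv_letter x" "\<xi> 0" "\<eta> 0"]
      by (auto simp: lift_less_def crosses_def ray_less_from_head_neq cut_less_def)
  qed
qed

lemma ray_mult_less_cancel:
  assumes \<xi>: "reduced_ray \<xi>" and \<eta>: "reduced_ray \<eta>" and less: "ray_less \<xi> \<eta>"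
    and cancel: "\<xi> 0 = inv_letter x" "\<eta> 0 = inv_letter x"
  shows "lift_less (of_bool (crosses x \<xi>), ray_mult \<xi> x) (of_bool (crosses x \<eta>), ray_mult \<eta> x)"
proof -
  have image: "ray_less (ray_mult \<xi> x) (ray_mult \<eta> x) \<longleftrightarrow> ray_less (\<xi> \<circ> Suc) (\<eta> \<circ> Suc)"
    using cancel by (simp add: ray_mult_def)
  have less': "ray_less_from (Some x) (\<xi> \<circ> Suc) (\<eta> \<circ> Suc)"
    using less cancel by (simp add: ray_less_from_head_eq)
  show ?thesis
  proof (cases "\<xi> (Suc 0) = \<eta> (Suc 0)")
    case True
    then show ?thesis
      using cancel image less' ray_less_from_cong_head[of "\<xi> \<circ> Suc" "\<eta> \<circ> Suc" "Some x" None]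
      by (simp add: lift_less_def crosses_def)
  next
    case False
    moreover have "\<xi> (Suc 0) \<noteq> x" "\<eta> (Suc 0) \<noteq> x"
      using reduced_ray_Suc_0[OF \<xi> cancel(1)] reduced_ray_Suc_0[OF \<eta> cancel(2)] .
    ultimately show ?thesis
      using image less' cancel letter_total[of "\<xi> (Suc 0)" x] letter_total[of "\<eta> (Suc 0)" x]
        letter_asym[of "\<xi> (Suc 0)" x]
      by (auto simp: lift_less_def crosses_def ray_less_from_head_neq cut_less_def)
  qed
qed

lemma ray_mult_less:
  assumes \<xi>: "reduced_ray \<xi>" and \<eta>: "reduced_ray \<eta>" and less: "ray_less \<xi> \<eta>"
  shows "lift_less (of_bool (crosses x \<xi>), ray_mult \<xi> x) (of_bool (crosses x \<eta>), ray_mult \<eta> x)"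
proof -
  let ?f = "inv_letter x"
  consider (prepend) "\<xi> 0 \<noteq> ?f" "\<eta> 0 \<noteq> ?f" | (cancel) "\<xi> 0 = ?f" "\<eta> 0 = ?f"
    | (cancel_left) "\<xi> 0 = ?f" "\<eta> 0 \<noteq> ?f" | (cancel_right) "\<xi> 0 \<noteq> ?f" "\<eta> 0 = ?f"
    by blast
  then show ?thesis
  proof cases
    case prepend
    then show ?thesis using less by (rule ray_mult_less_prepend[rotated])
  next
    case cancel
    then show ?thesis using \<xi> \<eta> less by (intro ray_mult_less_cancel)
  next
    case cancel_left
    then show ?thesis
      using less reduced_ray_Suc_0[OF \<xi>]
      by (auto simp: lift_less_def crosses_def ray_mult_def ray_less_from_head_neq)
  next
    case cancel_right
    then show ?thesis
      using less reduced_ray_Suc_0[OF \<eta>] letter_total[of "\<eta> (Suc 0)" x] letter_asym[of "\<xi> 0" ?f]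
      by (auto simp: lift_less_def crosses_def ray_mult_def ray_less_from_head_neq)
  qed
qed

lemma ray_mult_crossing:
  assumes \<xi>: "reduced_ray \<xi>" and \<eta>: "reduced_ray \<eta>"
    and crossing: "crosses x \<xi>" "\<not> crosses x \<eta>"
  shows "ray_less (ray_mult \<xi> x) (ray_mult \<eta> x)"
proof -
  let ?f = "inv_letter x"
  consider (prepend) "\<xi> 0 \<noteq> ?f" "\<eta> 0 \<noteq> ?f" | (cancel) "\<xi> 0 = ?f" "\<eta> 0 = ?f"
    | (cancel_left) "\<xi> 0 = ?f" "\<eta> 0 \<noteq> ?f" | (cancel_right) "\<xi> 0 \<noteq> ?f" "\<eta> 0 = ?f"
    by blast
  then show ?thesis
  proof cases
    case prepend
    then have "\<xi> 0 \<noteq> \<eta> 0"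
      using crossing by (auto simp: crosses_def)
    then show ?thesis
      using prepend crossing
      by (simp add: ray_mult_def ray_less_from_case_nat ray_less_from_head_neq cut_less_def crosses_def)
  next
    case cancel
    then have "\<xi> (Suc 0) \<noteq> \<eta> (Suc 0)" "\<eta> (Suc 0) \<noteq> x"
      using crossing reduced_ray_Suc_0[OF \<eta>] by (auto simp: crosses_def)
    then show ?thesis
      using cancel crossing letter_total[of "\<eta> (Suc 0)" x] letter_trans[of "\<xi> (Suc 0)" x "\<eta> (Suc 0)"]
      by (auto simp: ray_mult_def ray_less_from_head_neq crosses_def)
  next
    case cancel_left
    then show ?thesis
      using crossing reduced_ray_Suc_0[OF \<xi>]
      by (auto simp: ray_mult_def ray_less_from_head_neq crosses_def)
  next
    case cancel_right
    then show ?thesis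
      using crossing reduced_ray_Suc_0[OF \<eta>] letter_total[of "\<eta> (Suc 0)" x]
      by (auto simp: ray_mult_def ray_less_from_head_neq crosses_def)
  qed
qed

lemma lift_less_ray_mult:
  assumes "reduced_ray \<xi>" "reduced_ray \<eta>" "lift_less (m, \<xi>) (n, \<eta>)"
  shows "lift_less (m + ray_cocycle x \<xi>, ray_mult \<xi> x) (n + ray_cocycle x \<eta>, ray_mult \<eta> x)"
proof (cases "m = n")
  case True
  then show ?thesis
    using assms ray_mult_less[of \<xi> \<eta> x] by (auto simp: lift_less_def ray_cocycle_def)
next
  case False
  then have "m < n"
    using assms(3) by (simp add: lift_less_def)
  then show ?thesis
    using assms ray_mult_crossing[of \<xi> \<eta> x]
    by (cases "crosses x \<xi>"; cases "crosses x \<eta>") (auto simp: lift_less_def ray_cocycle_def)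
qed

lemma ray_cocycle_ray_mult_inv_letter:
  assumes "reduced_ray \<xi>"
  shows "ray_cocycle x (ray_mult \<xi> (inv_letter x)) + ray_cocycle (inv_letter x) \<xi> = 0"
proof -
  have "crosses x (ray_mult \<xi> (inv_letter x)) \<longleftrightarrow> \<not> crosses (inv_letter x) \<xi>"
  proof (cases "\<xi> 0 = x")
    case True
    then have "\<xi> (Suc 0) \<noteq> inv_letter x"
      using assms reduced_ray_Suc_0[of \<xi> "inv_letter x"] by simp
    then show ?thesis
      using True letter_total[of "\<xi> (Suc 0)" "inv_letter x"] letter_asym[of "\<xi> (Suc 0)" "inv_letter x"]
      by (auto simp: crosses_def ray_mult_def)
  next
    case False
    then show ?thesis
      using letter_total[of "\<xi> 0" x] letter_asym[of "\<xi> 0" x]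
      by (auto simp: crosses_def ray_mult_def)
  qed
  then show ?thesis
    by (simp add: ray_cocycle_def)
qed

definition coset_height :: "'a \<Rightarrow> 'a word \<Rightarrow> int" where
  "coset_height a w = (\<Sum>j<length w. ray_cocycle (w ! j) (coset_ray a (take j w)))"

definition coset_key :: "'a \<Rightarrow> 'a word \<Rightarrow> int \<times> 'a ray" where
  "coset_key a w = (coset_height a w, coset_ray a w)"

lemma coset_key_inj: "coset_rep a w \<Longrightarrow> coset_rep a u \<Longrightarrow> coset_key a w = coset_key a u \<Longrightarrow> w = u"
  by (simp add: coset_key_def coset_ray_inj)

lemma coset_height_Nil: "coset_height a [] = 0"
  by (simp add: coset_height_def)

lemma coset_height_snoc: "coset_height a (w @ [y]) = coset_height a w + ray_cocycle y (coset_ray a w)"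
  by (simp add: coset_height_def nth_append)

lemma ray_cocycle_const: "ray_cocycle (a, b) (\<lambda>_. (a, True)) = 0"
  using pos_less_neg[of a] letter_asym[OF pos_less_neg[of a]]
  by (cases b) (simp_all add: ray_cocycle_def crosses_def inv_letter_def)

lemma coset_key_snoc:
  assumes "coset_rep a (w @ [y])"
  shows "coset_key a (w @ [y]) = (coset_height a w + ray_cocycle y (coset_ray a w), ray_mult (coset_ray a w) y)"
  using coset_rep_snoc[OF assms] by (simp add: coset_key_def coset_height_snoc coset_ray_snoc_ray_mult)

lemma coset_key_cancel:
  assumes "coset_rep a (w @ [inv_letter y])"
  shows "coset_key a w = (coset_height a (w @ [inv_letter y]) + ray_cocycle y (coset_ray a (w @ [inv_letter y])),
    ray_mult (coset_ray a (w @ [inv_letter y])) y)"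
proof -
  have "reduced_ray (coset_ray a w)"
    using coset_rep_snoc[OF assms] by (simp add: reduced_coset_ray)
  moreover have "coset_ray a (w @ [inv_letter y]) = ray_mult (coset_ray a w) (inv_letter y)"
    using coset_rep_snoc[OF assms] by (simp add: coset_ray_snoc_ray_mult)
  ultimately show ?thesis
    using ray_cocycle_ray_mult_inv_letter[of "coset_ray a w" y]
      ray_mult_ray_mult_inv_letter[of "coset_ray a w" "inv_letter y"]
    by (simp add: coset_key_def coset_height_snoc)
qed

lemma coset_key_coset_mult_letter:
  assumes "coset_rep a w"
  shows "coset_key a (coset_mult a w [y]) =
    (coset_height a w + ray_cocycle y (coset_ray a w), ray_mult (coset_ray a w) y)"
proof -
  consider (cancel) "w \<noteq> []" "last w = inv_letter y" | (trivial) "w = []" "fst y = a"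
    | (append) "\<not> (w \<noteq> [] \<and> last w = inv_letter y)" "\<not> (w = [] \<and> fst y = a)"
    by blast
  then show ?thesis
  proof cases
    case cancel
    then have w: "w = butlast w @ [inv_letter y]"
      by (metis append_butlast_last_id)
    then have "coset_mult a w [y] = butlast w"
      using assms cancel by (simp add: coset_mult_letter)
    then show ?thesis
      using coset_key_cancel[of a "butlast w" y] assms by (simp flip: w)
  next
    case trivial
    then obtain b where "y = (a, b)"
      by (metis prod.collapse)
    then show ?thesis
      using assms trivial ray_mult_const[of a b] ray_cocycle_const[of a b]
      by (simp add: coset_mult_letter coset_key_def coset_ray_Nil coset_height_Nil)
  next
    case append
    then have mult: "coset_mult a w [y] = w @ [y]"
      using coset_mult_letter[OF assms, of y] by auto
    then have "coset_rep a (w @ [y])"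
      by (metis coset_rep_coset_mult)
    then show ?thesis
      by (simp add: mult coset_key_snoc)
  qed
qed

lemma lift_less_coset_mult:
  assumes "coset_rep a w" "coset_rep a w'" "lift_less (coset_key a w) (coset_key a w')"
  shows "lift_less (coset_key a (coset_mult a w g)) (coset_key a (coset_mult a w' g))"
  using assms
proof (induction g arbitrary: w w')
  case Nil
  then show ?case by (simp add: coset_mult_Nil)
next
  case (Cons y g)
  have "lift_less (coset_key a (coset_mult a w [y])) (coset_key a (coset_mult a w' [y]))"
    unfolding coset_key_coset_mult_letter[OF Cons.prems(1)] coset_key_coset_mult_letter[OF Cons.prems(2)]
    using lift_less_ray_mult[OF reduced_coset_ray[OF Cons.prems(1)] reduced_coset_ray[OF Cons.prems(2)]
        Cons.prems(3)[unfolded coset_key_def]]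
    by simp
  then have "lift_less (coset_key a (coset_mult a (coset_mult a w [y]) g))
      (coset_key a (coset_mult a (coset_mult a w' [y]) g))"
    by (rule Cons.IH[OF coset_rep_coset_mult coset_rep_coset_mult])
  then show ?case
    by (simp only: coset_mult_Cons[of a w y g] coset_mult_Cons[of a w' y g])
qed

definition fq_less :: "('a \<times> 'a word) rel" where
  "fq_less = {((a, w), (b, u)). (a, True) \<prec> (b, True) \<or> a = b \<and> lift_less (coset_key a w) (coset_key a u)}"

lemma strict_linear_order_on_fq_less: "strict_linear_order_on (fq_carrier S) fq_less"
proof -
  have "trans fq_less"
  proof (rule transI)
    fix p q r assume "(p, q) \<in> fq_less" "(q, r) \<in> fq_less"
    then show "(p, r) \<in> fq_less"
      using letter_trans[of "(fst p, True)" "(fst q, True)" "(fst r, True)"]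
        lift_less_trans[of "coset_key (fst p) (snd p)" "coset_key (fst q) (snd q)" "coset_key (fst r) (snd r)"]
      by (cases p, cases q, cases r) (auto simp: fq_less_def)
  qed
  moreover have "irrefl fq_less"
    by (auto simp: irrefl_def fq_less_def letter_irrefl lift_less_irrefl)
  moreover have "total_on (fq_carrier S) fq_less"
  proof (rule total_onI)
    fix p q assume "p \<in> fq_carrier S" "q \<in> fq_carrier S" "p \<noteq> q"
    obtain a w b u where pq: "p = (a, w)" "q = (b, u)"
      by (cases p, cases q) auto
    show "(p, q) \<in> fq_less \<or> (q, p) \<in> fq_less"
    proof (cases "a = b")
      case True
      have "coset_rep a w" "coset_rep a u"
        using \<open>p \<in> _\<close> \<open>q \<in> _\<close> coset_rep_if_fq_carrier by (simp_all add: pq True)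
      moreover have "w \<noteq> u"
        using \<open>p \<noteq> q\<close> by (simp add: pq True)
      ultimately have "coset_key a w \<noteq> coset_key a u"
        using coset_key_inj by blast
      then show ?thesis
        using lift_less_total[of "coset_key a w" "coset_key a u"] by (auto simp: fq_less_def pq True)
    next
      case False
      then show ?thesis
        using letter_total[of "(a, True)" "(b, True)"] by (auto simp: fq_less_def pq)
    qed
  qed
  ultimately show ?thesis
    by (simp add: strict_linear_order_on_def)
qed

lemma fq_less_fq_op:
  assumes "x \<in> fq_carrier S" "y \<in> fq_carrier S" "(x, y) \<in> fq_less"
  shows "(fq_op x z, fq_op y z) \<in> fq_less"
proof -
  obtain a w a' w' b u where xyz: "x = (a, w)" "y = (a', w')" "z = (b, u)"
    by (cases x, cases y, cases z) auto
  have "coset_rep a w" "coset_rep a' w'"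
    using assms(1,2) coset_rep_if_fq_carrier by (simp_all add: xyz)
  then show ?thesis
    using assms(3) lift_less_coset_mult[of a w w']
    by (auto simp: xyz fq_less_def fq_op_conv)
qed

lemma right_orderable_fq:
  fixes S :: "'a set"
  shows "right_orderable (fq_carrier S) fq_op"
proof -
  have "\<forall>x\<in>fq_carrier S. \<forall>y\<in>fq_carrier S. \<forall>z\<in>fq_carrier S.
      (x, y) \<in> fq_less \<longrightarrow> (fq_op x z, fq_op y z) \<in> fq_less"
    using fq_less_fq_op by blast
  then show ?thesis
    unfolding right_orderable_def using strict_linear_order_on_fq_less by blast
qed

end

lemma ex_letter_order: "\<exists>less_letter :: 'a \<times> bool \<Rightarrow> 'a \<times> bool \<Rightarrow> bool. letter_order less_letter"
proof -
  obtain r :: "'a rel" where "Well_order r" "Field r = UNIV"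
    using well_ordering[where 'a = 'a] by (elim exE conjE)
  then have lin: "linear_order r"
    by (simp add: well_order_on_def)
  have r_trans: "(a, b) \<in> r \<Longrightarrow> (b, c) \<in> r \<Longrightarrow> (a, c) \<in> r" for a b c
    using lin unfolding linear_order_on_def partial_order_on_def preorder_on_def
    by (blast dest: transD)
  have r_antisym: "(a, b) \<in> r \<Longrightarrow> (b, a) \<in> r \<Longrightarrow> a = b" for a b
    using lin unfolding linear_order_on_def partial_order_on_def by (blast dest: antisymD)
  have r_total: "a \<noteq> b \<Longrightarrow> (a, b) \<in> r \<or> (b, a) \<in> r" for a b
    using lin by (simp add: linear_order_on_def total_on_def)
  define less_letter :: "'a \<times> bool \<Rightarrow> 'a \<times> bool \<Rightarrow> bool" where
    "less_letter x y \<longleftrightarrow> (fst x, fst y) \<in> r \<and> fst x \<noteq> fst y \<or> fst x = fst y \<and> snd x \<and> \<not> snd y"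
    for x y
  have "letter_order less_letter"
  proof
    show "\<not> less_letter x x" for x
      by (simp add: less_letter_def)
    show "less_letter x z" if "less_letter x y" "less_letter y z" for x y z
      using that r_trans[of "fst x" "fst y" "fst z"] r_antisym[of "fst x" "fst y"]
      unfolding less_letter_def by auto
    show "less_letter x y \<or> less_letter y x" if "x \<noteq> y" for x y
      using that r_total[of "fst x" "fst y"] unfolding less_letter_def by (auto simp: prod_eq_iff)
    show "less_letter (s, True) (s, False)" for s
      by (simp add: less_letter_def)
  qed
  then show ?thesis
    by blast
qed

theorem theorem3p5:
  fixes S :: "'a set"
  shows "right_orderable (fq_carrier S) fq_op \<and> semi_latin (fq_carrier S) fq_op"
proof
  obtain less_letter :: "'a \<times> bool \<Rightarrow> 'a \<times> bool \<Rightarrow> bool" where "letter_order less_letter"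
    using ex_letter_order by blast
  then show "right_orderable (fq_carrier S) fq_op"
    by (rule letter_order.right_orderable_fq)
  show "semi_latin (fq_carrier S) fq_op"
    by (rule semi_latin_fq)
qed

end
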